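(* Let $\mathcal{X}$ be a finite set of $n$ items and let $\mathcal{D}=\{(x_j,C_j)\}_{j=1}^m$ be a dataset of choices, $x_j\in C_j\subseteq\mathcal{X}$, $|C_j|\ge 2$. The full-rank CDM on $\mathcal{X}$ is identifiable from $\mathcal{D}$ if and only if $\mathrm{rank}(G(\mathcal{D}))=n(n-1)-1$.
   Context: A (full-rank) CDM on $\mathcal{X}$ has parameter vector $u=(u_{xz})_{x\neq z}\in\mathbb{R}^{n(n-1)}$ and choice probabilities, for $C\subseteq\mathcal{X}$, $|C|\ge2$, $x\in C$, $P_u(x\mid C)=\dfrac{\exp\big(\sum_{z\in C\setminus\{x\}}u_{xz}\big)}{\sum_{y\in C}\exp\big(\sum_{z\in C\setminus\{y\}}u_{yz}\big)}$; these are invariant under adding a common constant to all entries of $u$. The CDM is identifiable from $\mathcal{D}$ if whenever $u,u'$ satisfy $P_u(x\mid C)=P_{u'}(x\mid C)$ for every distinct set $C$ among $C_1,\dots,C_m$ and every $x\in C$, then $u'-u=\alpha\mathbf{1}$ for some $\alpha\in\mathbb{R}$. For a set $C$ and $x\in C$, let $g_{x,C}\in\mathbb{Z}^{n(n-1)}$ be the integer vector with $g_{x,C}^{T}u=\sum_{y\in C\setminus\{x\}}\Big([u_{xy}-u_{yx}]+\sum_{z\in C\setminus\{x,y\}}[u_{xz}-u_{yz}]\Big)$ for all $u$. $G(\mathcal{D})$ is the integer matrix with one row $g_{x,C_j}^{T}$ for every datapoint $j$ and every item $x\in C_j$. *)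

theory Defs
  imports "HOL-Analysis.Analysis"
begin

text \<open>Items form a finite type 'a (the item set X is UNIV, n = CARD('a)).
  Parameter vectors u live in real^('a \<times> 'a); only off-diagonal entries u $ (x,z), x \<noteq> z,
  are meaningful (diagonal entries never enter the model).\<close>

definition cdm_prob :: "real^('a::finite \<times> 'a) \<Rightarrow> 'a \<Rightarrow> 'a set \<Rightarrow> real" where
  "cdm_prob u x C =
     exp (\<Sum>z\<in>C - {x}. u $ (x, z)) / (\<Sum>y\<in>C. exp (\<Sum>z\<in>C - {y}. u $ (y, z)))"

definition cdm_identifiable :: "('a::finite \<times> 'a set) list \<Rightarrow> bool" where
  "cdm_identifiable D \<longleftrightarrow>
     (\<forall>u u'. (\<forall>C\<in>snd ` set D. \<forall>x\<in>C. cdm_prob u x C = cdm_prob u' x C) \<longrightarrow>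
        (\<exists>\<alpha>::real. \<forall>x z. x \<noteq> z \<longrightarrow> u' $ (x, z) - u $ (x, z) = \<alpha>))"

definition g_vec :: "'a::finite \<Rightarrow> 'a set \<Rightarrow> real^('a \<times> 'a)" where
  "g_vec x C = (THE g. (\<forall>a. g $ (a, a) = 0) \<and>
     (\<forall>u. g \<bullet> u = (\<Sum>y\<in>C - {x}. (u $ (x, y) - u $ (y, x))
                     + (\<Sum>z\<in>C - {x, y}. u $ (x, z) - u $ (y, z)))))"

definition G_rows :: "('a::finite \<times> 'a set) list \<Rightarrow> (real^('a \<times> 'a)) set" where
  "G_rows D = {g_vec x C | x C. C \<in> snd ` set D \<and> x \<in> C}"

text \<open>rank G(D) = dimension of the row space (over the reals, equal to the rank over Q).\<close>
definition G_rank :: "('a::finite \<times> 'a set) list \<Rightarrow> nat" where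
  "G_rank D = dim (G_rows D)"

end

theory Submission
  imports Defs
begin

(* With s_x(u) the sum of u_xz over z in C - {x}, one has g_{x,C} . u = sum over y in C of
   (s_x(u) - s_y(u)), while P_u( . | C) is the softmax of the s_x(u). Softmax probabilities agree
   iff the utilities differ by a common shift, i.e. iff every g_{x,C} . (u' - u) vanishes; so
   identifiability says that every vector orthogonal to the rows of G(D) is constant off the
   diagonal. All rows lie in the space W of vectors with zero diagonal that are orthogonal to the
   off-diagonal all-ones vector, and dim W = n(n-1) - 1. Since the rows ignore the diagonal and
   annihilate the all-ones vector, the kernel condition is equivalent to no nonzero vector of W
   being orthogonal to the rows, i.e. to the rows spanning W. *)

lemma dim_eq_iff_orthogonal_trivial:
  fixes S W :: "'a::euclidean_space set"
  assumes "subspace W" "S \<subseteq> W"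
  shows "dim S = dim W \<longleftrightarrow> (\<forall>w\<in>W. (\<forall>s\<in>S. s \<bullet> w = 0) \<longrightarrow> w = 0)"
proof -
  have "{w \<in> W. \<forall>s\<in>span S. orthogonal s w} = {w \<in> W. \<forall>s\<in>S. s \<bullet> w = 0}"
    by (auto simp: orthogonal_def inner_commute span_base
             intro: orthogonal_to_span[unfolded orthogonal_def])
  then have "dim {w \<in> W. \<forall>s\<in>S. s \<bullet> w = 0} + dim S = dim W"
    using dim_subspace_orthogonal_to_vectors[of "span S" W] assms
    by (simp add: span_minimal)
  moreover have "dim {w \<in> W. \<forall>s\<in>S. s \<bullet> w = 0} = 0 \<longleftrightarrow> (\<forall>w\<in>W. (\<forall>s\<in>S. s \<bullet> w = 0) \<longrightarrow> w = 0)"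
    by auto
  ultimately show ?thesis by linarith
qed

definition choice_utility :: "real^('a::finite \<times> 'a) \<Rightarrow> 'a \<Rightarrow> 'a set \<Rightarrow> real" where
  "choice_utility u x C = (\<Sum>z\<in>C - {x}. u $ (x, z))"

definition utility_contrast :: "'a::finite \<Rightarrow> 'a set \<Rightarrow> real^('a \<times> 'a) \<Rightarrow> real" where
  "utility_contrast x C u = (\<Sum>y\<in>C - {x}. (u $ (x, y) - u $ (y, x))
                              + (\<Sum>z\<in>C - {x, y}. u $ (x, z) - u $ (y, z)))"

definition zero_diag :: "(real^('a::finite \<times> 'a)) set" where
  "zero_diag = {w. \<forall>a. w $ (a, a) = 0}"

definition offdiag_ones :: "real^('a::finite \<times> 'a)" where
  "offdiag_ones = (\<chi> p. if fst p \<noteq> snd p then 1 else 0)"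

lemma linear_utility_contrast: "linear (utility_contrast x C)"
  by (rule linearI)
    (simp_all add: utility_contrast_def sum.distrib sum_distrib_left algebra_simps sum_subtractf)

lemma g_vec_characterization:
  "g_vec x C \<in> zero_diag \<and> (\<forall>u. g_vec x C \<bullet> u = utility_contrast x C u)"
proof -
  let ?P = "\<lambda>g. (\<forall>a. g $ (a, a) = 0) \<and> (\<forall>u. g \<bullet> u = utility_contrast x C u)"
  define g where "g = (\<Sum>i\<in>Basis. utility_contrast x C i *\<^sub>R i)"
  have inner_g: "g \<bullet> u = utility_contrast x C u" for u
    using Linear_Algebra.linear_componentwise[OF linear_utility_contrast, where x=u and j=1]
    unfolding g_def inner_sum_left inner_scaleR_left by (simp add: inner_commute[of u] mult.commute)
  have "g $ (a, a) = 0" for a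
  proof -
    have "g $ (a, a) = utility_contrast x C (axis (a, a) 1)"
      using inner_g by (simp add: cart_eq_inner_axis)
    also have "\<dots> = 0" unfolding utility_contrast_def
      by (intro sum.neutral ballI) (auto simp: axis_def split: if_splits intro!: sum.neutral)
    finally show ?thesis .
  qed
  with inner_g have Pg: "?P g" by simp
  have "h = g" if "?P h" for h
    using that Pg inner_eq_zero_iff[of "h - g"] by (simp add: inner_diff_left)
  with Pg have "?P (THE g. ?P g)" by (rule theI)
  then show ?thesis by (simp add: g_vec_def utility_contrast_def zero_diag_def)
qed

lemma inner_g_vec: "g_vec x C \<bullet> u = utility_contrast x C u"
  using g_vec_characterization by blast

lemma g_vec_in_zero_diag: "g_vec x C \<in> zero_diag"
  using g_vec_characterization by blast

lemma choice_utility_diff: "choice_utility (u' - u) x C = choice_utility u' x C - choice_utility u x C"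
  by (simp add: choice_utility_def sum_subtractf)

lemma utility_contrast_eq_sum_diff:
  assumes "x \<in> C"
  shows "utility_contrast x C u = (\<Sum>y\<in>C. choice_utility u x C - choice_utility u y C)"
proof -
  have "u $ (x, y) - u $ (y, x) + (\<Sum>z\<in>C - {x, y}. u $ (x, z) - u $ (y, z)) =
        choice_utility u x C - choice_utility u y C" if y: "y \<in> C - {x}" for y
  proof -
    have "C - {x} = insert y (C - {x, y})" and "C - {y} = insert x (C - {x, y})"
      using y assms by auto
    then show ?thesis
      using y by (simp add: choice_utility_def sum_subtractf)
  qed
  then have "utility_contrast x C u = (\<Sum>y\<in>C - {x}. choice_utility u x C - choice_utility u y C)"
    unfolding utility_contrast_def by (rule sum.cong[OF refl])
  also have "\<dots> = (\<Sum>y\<in>C. choice_utility u x C - choice_utility u y C)"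
    using assms
    by (cases "finite C")
      (simp_all add: sum.remove[of C x "\<lambda>y. choice_utility u x C - choice_utility u y C"])
  finally show ?thesis .
qed

lemma cdm_prob_eq_iff_inner_g_vec:
  "(\<forall>x\<in>C. cdm_prob u x C = cdm_prob u' x C) \<longleftrightarrow> (\<forall>x\<in>C. g_vec x C \<bullet> (u' - u) = 0)"
proof (cases "C = {}")
  case False
  define Z where "Z v = (\<Sum>y\<in>C. exp (choice_utility v y C))" for v
  have Z_pos: "Z v > 0" for v
    unfolding Z_def using False by (intro sum_pos) auto
  have prob: "cdm_prob v x C = exp (choice_utility v x C) / Z v" for v x
    by (simp add: cdm_prob_def Z_def choice_utility_def)
  have contrast: "g_vec x C \<bullet> (u' - u) =
      (\<Sum>y\<in>C. choice_utility (u' - u) x C - choice_utility (u' - u) y C)" if "x \<in> C" for x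
    by (simp add: inner_g_vec utility_contrast_eq_sum_diff[OF that])
  show ?thesis
  proof
    assume eq: "\<forall>x\<in>C. cdm_prob u x C = cdm_prob u' x C"
    have shift: "choice_utility (u' - u) x C = ln (Z u') - ln (Z u)" if "x \<in> C" for x
    proof -
      have "ln (cdm_prob u x C) = ln (cdm_prob u' x C)" using eq that by simp
      then show ?thesis
        using Z_pos[of u] Z_pos[of u'] by (simp add: prob ln_div choice_utility_diff)
    qed
    show "\<forall>x\<in>C. g_vec x C \<bullet> (u' - u) = 0"
      using shift by (simp add: contrast)
  next
    assume orth: "\<forall>x\<in>C. g_vec x C \<bullet> (u' - u) = 0"
    define k where "k = (\<Sum>y\<in>C. choice_utility (u' - u) y C) / real (card C)"
    have card_pos: "real (card C) > 0"
      using False by (simp add: card_gt_0_iff)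
    have shift: "choice_utility u' x C = choice_utility u x C + k" if "x \<in> C" for x
    proof -
      have "real (card C) * choice_utility (u' - u) x C = (\<Sum>y\<in>C. choice_utility (u' - u) y C)"
        using orth that contrast[OF that] by (simp add: sum_subtractf)
      then have "choice_utility (u' - u) x C = k"
        unfolding k_def using card_pos False by (simp add: eq_divide_eq mult.commute)
      then show ?thesis by (simp add: choice_utility_diff)
    qed
    have "Z u' = exp k * Z u"
      unfolding Z_def sum_distrib_left by (rule sum.cong) (auto simp: shift exp_add mult.commute)
    then show "\<forall>x\<in>C. cdm_prob u x C = cdm_prob u' x C"
      using shift by (auto simp: prob exp_add)
  qed
qed simp

lemma cdm_identifiable_iff_kernel:
  "cdm_identifiable D \<longleftrightarrow>
   (\<forall>w. (\<forall>r\<in>G_rows D. r \<bullet> w = 0) \<longrightarrow> (\<exists>\<alpha>. \<forall>x z. x \<noteq> z \<longrightarrow> w $ (x, z) = \<alpha>))"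
proof -
  have data_eq: "(\<forall>C\<in>snd ` set D. \<forall>x\<in>C. cdm_prob u x C = cdm_prob u' x C) \<longleftrightarrow>
                 (\<forall>r\<in>G_rows D. r \<bullet> (u' - u) = 0)" for u u'
    using cdm_prob_eq_iff_inner_g_vec[of _ u u'] unfolding G_rows_def by blast
  define trivial where "trivial w \<longleftrightarrow>
    (\<forall>r\<in>G_rows D. r \<bullet> w = 0) \<longrightarrow> (\<exists>\<alpha>. \<forall>x z. x \<noteq> z \<longrightarrow> w $ (x, z) = \<alpha>)" for w
  have "cdm_identifiable D \<longleftrightarrow> (\<forall>u u'. trivial (u' - u))"
    unfolding cdm_identifiable_def data_eq trivial_def by simp
  also have "\<dots> \<longleftrightarrow> (\<forall>w. trivial w)"
    by (metis diff_zero)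
  finally show ?thesis
    unfolding trivial_def .
qed

lemma utility_contrast_offdiag_ones:
  assumes "x \<in> C"
  shows "utility_contrast x C offdiag_ones = 0"
proof -
  have "choice_utility offdiag_ones y C = (\<Sum>z\<in>C - {y}. 1)" for y
    unfolding choice_utility_def offdiag_ones_def by (rule sum.cong) auto
  moreover have "card (C - {y}) = card (C - {x})" if "y \<in> C" for y
    using that assms by (cases "finite C") (simp_all add: card_Diff_singleton_if)
  ultimately show ?thesis
    by (simp add: utility_contrast_eq_sum_diff[OF assms])
qed

lemma G_rows_orthogonal_offdiag_ones:
  "G_rows D \<subseteq> {w \<in> zero_diag. w \<bullet> offdiag_ones = 0}"
  by (auto simp: G_rows_def g_vec_in_zero_diag inner_g_vec utility_contrast_offdiag_ones)

lemma card_offdiag: "card {p::'a::finite \<times> 'a. fst p \<noteq> snd p} = CARD('a) * (CARD('a) - 1)"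
proof -
  have "{p::'a \<times> 'a. fst p \<noteq> snd p} = UNIV - range (\<lambda>a. (a, a))" by auto
  moreover have "card (range (\<lambda>a::'a. (a, a))) = CARD('a)"
    by (rule card_image) (auto simp: inj_on_def)
  ultimately show ?thesis
    using card_cartesian_product[of "UNIV :: 'a set" "UNIV :: 'a set"]
    by (simp add: card_Diff_subset diff_mult_distrib2 del: UNIV_Times_UNIV)
qed

lemma dim_zero_diag: "dim (zero_diag :: (real^('a::finite \<times> 'a)) set) = CARD('a) * (CARD('a) - 1)"
proof -
  have "zero_diag = {w :: real^('a \<times> 'a). \<forall>i. i \<notin> {p. fst p \<noteq> snd p} \<longrightarrow> w $ i = 0}"
    by (auto simp: zero_diag_def)
  then show ?thesis
    using dim_substandard_cart[where 'a=real and d="{p::'a \<times> 'a. fst p \<noteq> snd p}"]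
    by (simp only: dim_vec_eq card_offdiag)
qed

lemma dim_zero_diag_orthogonal_offdiag_ones:
  "dim {w :: real^('a::finite \<times> 'a). w \<in> zero_diag \<and> w \<bullet> offdiag_ones = 0} =
   CARD('a) * (CARD('a) - 1) - 1"
proof -
  have sub: "subspace (zero_diag :: (real^('a \<times> 'a)) set)"
    by (simp add: subspace_def zero_diag_def)
  have ones: "offdiag_ones \<in> (zero_diag :: (real^('a \<times> 'a)) set)"
    by (simp add: zero_diag_def offdiag_ones_def)
  have perp_span: "{w \<in> zero_diag. \<forall>v\<in>span {offdiag_ones}. orthogonal v w} =
        {w :: real^('a \<times> 'a). w \<in> zero_diag \<and> w \<bullet> offdiag_ones = 0}"
    by (auto simp: orthogonal_def inner_commute span_base
             intro: orthogonal_to_span[unfolded orthogonal_def])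
  have "dim {w \<in> zero_diag. \<forall>v\<in>span {offdiag_ones}. orthogonal v (w :: real^('a \<times> 'a))}
        + dim (span {offdiag_ones :: real^('a \<times> 'a)})
        = dim (zero_diag :: (real^('a \<times> 'a)) set)"
    by (rule dim_subspace_orthogonal_to_vectors) (simp_all add: sub ones span_minimal)
  then have "dim {w :: real^('a \<times> 'a). w \<in> zero_diag \<and> w \<bullet> offdiag_ones = 0}
             + dim {offdiag_ones :: real^('a \<times> 'a)}
             = CARD('a) * (CARD('a) - 1)"
    unfolding perp_span dim_span dim_zero_diag .
  moreover have "CARD('a) * (CARD('a) - 1) = 0" if "offdiag_ones = (0 :: real^('a \<times> 'a))"
  proof -
    have "{p::'a \<times> 'a. fst p \<noteq> snd p} = {}"
    proof (rule ccontr)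
      assume "{p::'a \<times> 'a. fst p \<noteq> snd p} \<noteq> {}"
      then obtain p :: "'a \<times> 'a" where "fst p \<noteq> snd p" by auto
      then have "offdiag_ones $ p = (1 :: real)" by (simp add: offdiag_ones_def)
      with that show False by simp
    qed
    then show ?thesis by (metis card_offdiag card.empty)
  qed
  ultimately show ?thesis by (cases "offdiag_ones = (0 :: real^('a \<times> 'a))") auto
qed

lemma offdiag_constant_kernel_iff_trivial_kernel:
  assumes R: "R \<subseteq> {w \<in> zero_diag. w \<bullet> offdiag_ones = 0}"
  shows "(\<forall>w. (\<forall>r\<in>R. r \<bullet> w = 0) \<longrightarrow> (\<exists>\<alpha>. \<forall>x z. x \<noteq> z \<longrightarrow> w $ (x, z) = \<alpha>)) \<longleftrightarrow>
         (\<forall>w\<in>{w \<in> zero_diag. w \<bullet> offdiag_ones = 0}. (\<forall>r\<in>R. r \<bullet> w = 0) \<longrightarrow> w = 0)"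
proof
  assume const: "\<forall>w. (\<forall>r\<in>R. r \<bullet> w = 0) \<longrightarrow> (\<exists>\<alpha>. \<forall>x z. x \<noteq> z \<longrightarrow> w $ (x, z) = \<alpha>)"
  show "\<forall>w\<in>{w \<in> zero_diag. w \<bullet> offdiag_ones = 0}. (\<forall>r\<in>R. r \<bullet> w = 0) \<longrightarrow> w = 0"
  proof (intro ballI impI)
    fix w assume w: "w \<in> {w \<in> zero_diag. w \<bullet> offdiag_ones = 0}" and "\<forall>r\<in>R. r \<bullet> w = 0"
    then obtain \<alpha> where "\<forall>x z. x \<noteq> z \<longrightarrow> w $ (x, z) = \<alpha>" using const by blast
    with w have w_eq: "w = \<alpha> *\<^sub>R offdiag_ones"
      by (auto simp: vec_eq_iff zero_diag_def offdiag_ones_def)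
    with w have "\<alpha> = 0 \<or> offdiag_ones = (0 :: real^('a \<times> 'a))" by auto
    with w_eq show "w = 0" by auto
  qed
next
  assume trivial: "\<forall>w\<in>{w \<in> zero_diag. w \<bullet> offdiag_ones = 0}. (\<forall>r\<in>R. r \<bullet> w = 0) \<longrightarrow> w = 0"
  show "\<forall>w. (\<forall>r\<in>R. r \<bullet> w = 0) \<longrightarrow> (\<exists>\<alpha>. \<forall>x z. x \<noteq> z \<longrightarrow> w $ (x, z) = \<alpha>)"
  proof (intro allI impI)
    fix w assume orth: "\<forall>r\<in>R. r \<bullet> w = 0"
    \<comment> \<open>Erase the diagonal of w and project onto W; the result is orthogonal to R, hence 0.\<close>
    define w' :: "real^('a \<times> 'a)" where "w' = (\<chi> p. if fst p \<noteq> snd p then w $ p else 0)"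
    define c where "c = (w' \<bullet> offdiag_ones) / (offdiag_ones \<bullet> (offdiag_ones :: real^('a \<times> 'a)))"
    have "r \<bullet> w' = r \<bullet> w" if "r \<in> zero_diag" for r
      unfolding inner_vec_def
      by (rule sum.cong[OF refl]) (use that in \<open>auto simp: w'_def zero_diag_def\<close>)
    with R orth have "r \<bullet> (w' - c *\<^sub>R offdiag_ones) = 0" if "r \<in> R" for r
      using that by (auto simp: inner_diff_right)
    moreover have "w' - c *\<^sub>R offdiag_ones \<in> zero_diag"
      by (simp add: w'_def zero_diag_def offdiag_ones_def)
    moreover have "(w' - c *\<^sub>R offdiag_ones) \<bullet> offdiag_ones = 0"
      by (cases "offdiag_ones = (0 :: real^('a \<times> 'a))") (simp_all add: c_def inner_diff_left)
    ultimately have "w' = c *\<^sub>R offdiag_ones" using trivial by auto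
    have "w $ (x, z) = c" if "x \<noteq> z" for x z
    proof -
      have "w $ (x, z) = w' $ (x, z)" using that by (simp add: w'_def)
      also have "\<dots> = c * offdiag_ones $ (x, z)" using \<open>w' = c *\<^sub>R offdiag_ones\<close> by simp
      also have "\<dots> = c" using that by (simp add: offdiag_ones_def)
      finally show ?thesis .
    qed
    then show "\<exists>\<alpha>. \<forall>x z. x \<noteq> z \<longrightarrow> w $ (x, z) = \<alpha>" by blast
  qed
qed

theorem theorem4:
  fixes D :: "('a::finite \<times> 'a set) list"
  assumes "\<forall>(x, C)\<in>set D. x \<in> C \<and> card C \<ge> 2"
  shows "cdm_identifiable D \<longleftrightarrow> G_rank D = CARD('a) * (CARD('a) - 1) - 1"
proof -
  let ?W = "{w :: real^('a \<times> 'a). w \<in> zero_diag \<and> w \<bullet> offdiag_ones = 0}"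
  have "subspace ?W"
    by (auto simp: subspace_def zero_diag_def inner_add_left)
  have "cdm_identifiable D \<longleftrightarrow> (\<forall>w\<in>?W. (\<forall>r\<in>G_rows D. r \<bullet> w = 0) \<longrightarrow> w = 0)"
    unfolding cdm_identifiable_iff_kernel
    by (rule offdiag_constant_kernel_iff_trivial_kernel[OF G_rows_orthogonal_offdiag_ones])
  also have "\<dots> \<longleftrightarrow> dim (G_rows D) = dim ?W"
    using dim_eq_iff_orthogonal_trivial[OF \<open>subspace ?W\<close> G_rows_orthogonal_offdiag_ones] by simp
  finally show ?thesis
    by (simp add: G_rank_def dim_zero_diag_orthogonal_offdiag_ones)
qed

end
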